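(* Let $M$ be a generic metric space and let $r$ be a real number with $0<r<\min\{s(M)/4,\ e(M)/4,\ t(M)/6\}$. Then the sphere $S_r(M)=\{Y\in\mathcal{GH}: d_{GH}(M,Y)=r\}$ is path connected in $\mathcal{GH}$, i.e., any two of its elements can be joined by a continuous curve in $\mathcal{GH}$ whose image lies in $S_r(M)$.
   Context: For a metric space $M$ with $\#M\ge3$: $s(M)=\inf\{|xx'|: x\ne x'\}$; $t(M)=\inf\{|xx'|+|x'x''|-|xx''|: x,x',x''\text{ pairwise distinct}\}$; $S(M)$ is the set of bijections $M\to M$ and $e(M)=\inf\{\operatorname{dis}f: f\in S(M), f\ne\mathrm{id}\}$, where $\operatorname{dis}f=\sup_{x,x'}||xx'|-|f(x)f(x')||$. $M$ is called generic if $\#M\ge3$ and $s(M),t(M),e(M)$ are all positive. $d_{GH}$ is the Gromov–Hausdorff distance (possibly infinite): $d_{GH}(X,Y)$ is the infimum of $r$ such that there exist a metric space $Z$ and subsets $X',Y'\subset Z$ isometric to $X,Y$ with Hausdorff distance $d_H(X',Y')\le r$. $\mathcal{GH}$ is the class (in the sense of von Neumann–Bernays–Gödel set theory) of representatives of isometry classes of all metric spaces; for each cardinal $n$ the subclass $\mathcal{GH}_n$ of spaces of cardinality at most $n$ is a set with topology based on open $d_{GH}$-balls, and a map from a topological space into $\mathcal{GH}$ is continuous if it is continuous into some (equivalently, every) $\mathcal{GH}_n$ containing its image. A continuous curve is a continuous map from a segment $[a,b]$. *)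

theory Defs
  imports "HOL-Analysis.Analysis"
begin

text \<open>A metric space is a pair of a carrier set and a distance function, i.e. the
  library locale Metric_space.  Distances that may be infinite are valued in ereal.\<close>

definition s_inv :: "'a set \<Rightarrow> ('a \<Rightarrow> 'a \<Rightarrow> real) \<Rightarrow> ereal" where
  "s_inv M d = (INF p \<in> {(x, x'). x \<in> M \<and> x' \<in> M \<and> x \<noteq> x'}. ereal (d (fst p) (snd p)))"

definition t_inv :: "'a set \<Rightarrow> ('a \<Rightarrow> 'a \<Rightarrow> real) \<Rightarrow> ereal" where
  "t_inv M d = (INF p \<in> {(x, x', x''). x \<in> M \<and> x' \<in> M \<and> x'' \<in> M \<and>
        x \<noteq> x' \<and> x' \<noteq> x'' \<and> x \<noteq> x''}.
     (case p of (x, x', x'') \<Rightarrow> ereal (d x x' + d x' x'' - d x x'')))"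

definition distortion :: "'a set \<Rightarrow> ('a \<Rightarrow> 'a \<Rightarrow> real) \<Rightarrow> ('a \<Rightarrow> 'a) \<Rightarrow> ereal" where
  "distortion M d f = (SUP p \<in> M \<times> M. ereal \<bar>d (fst p) (snd p) - d (f (fst p)) (f (snd p))\<bar>)"

definition e_inv :: "'a set \<Rightarrow> ('a \<Rightarrow> 'a \<Rightarrow> real) \<Rightarrow> ereal" where
  "e_inv M d = (INF f \<in> {f. bij_betw f M M \<and> (\<exists>x\<in>M. f x \<noteq> x)}. distortion M d f)"

definition generic :: "'a set \<Rightarrow> ('a \<Rightarrow> 'a \<Rightarrow> real) \<Rightarrow> bool" where
  "generic M d \<longleftrightarrow> Metric_space M d \<and> (infinite M \<or> card M \<ge> 3) \<and>
     s_inv M d > 0 \<and> t_inv M d > 0 \<and> e_inv M d > 0"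

definition hausdorff_dist :: "('c \<Rightarrow> 'c \<Rightarrow> real) \<Rightarrow> 'c set \<Rightarrow> 'c set \<Rightarrow> ereal" where
  "hausdorff_dist d A B = max (SUP a \<in> A. INF b \<in> B. ereal (d a b))
                              (SUP b \<in> B. INF a \<in> A. ereal (d a b))"

text \<open>The ambient space Z is taken
  to be the disjoint union X \<squnion> Y with a metric extending those of X and Y
  (standard equivalent form of the definition via arbitrary ambient Z).\<close>
definition dGH :: "'a set \<Rightarrow> ('a \<Rightarrow> 'a \<Rightarrow> real) \<Rightarrow> 'b set \<Rightarrow> ('b \<Rightarrow> 'b \<Rightarrow> real) \<Rightarrow> ereal" where
  "dGH X dX Y dY = (INF dZ \<in> {dZ. Metric_space (X <+> Y) dZ \<and>
        (\<forall>x\<in>X. \<forall>x'\<in>X. dZ (Inl x) (Inl x') = dX x x') \<and>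
        (\<forall>y\<in>Y. \<forall>y'\<in>Y. dZ (Inr y) (Inr y') = dY y y')}.
      hausdorff_dist dZ (Inl ` X) (Inr ` Y))"

definition isometric :: "'a set \<Rightarrow> ('a \<Rightarrow> 'a \<Rightarrow> real) \<Rightarrow> 'b set \<Rightarrow> ('b \<Rightarrow> 'b \<Rightarrow> real) \<Rightarrow> bool" where
  "isometric X dX Y dY \<longleftrightarrow> (\<exists>f. bij_betw f X Y \<and> (\<forall>x\<in>X. \<forall>x'\<in>X. dY (f x) (f x') = dX x x'))"

end

theory Submission
  imports Defs
begin

(* Let 4r < min(s(M), e(M)). Two surjections X -> M whose distortions add up to less than
   both s(M) and e(M) are equal, since they differ by a bijection of M of distortion below e(M).
   Hence if d_GH(M, Y) = r, the surjections Y -> M of distortion at most 2(r + eps) are all equal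
   for small eps, so one of them, idx, has distortion exactly 2r.
   Given such maps for Y1 and Y2, glue Y1 and Y2 by placing points over i, j in M at distance
   dM i j, or 2r if i = j; the triangle inequality holds because s(M) and t(M) exceed 2r.
   Interpolating linearly from the pullback of d1 through this glued metric to the pullback of d2
   gives a path that is Lipschitz for d_GH, along which idx remains a surjection of distortion 2r
   and which always contains an isometric copy of Y1 or Y2. A space strictly closer to M would
   carry a surjection of smaller distortion, equal to idx by uniqueness, and restricting it to the
   copy of Yi would bring Yi closer than r to M. So the path stays on the sphere. *)

section \<open>Gromov--Hausdorff distance and maps of small distortion\<close>

definition onto_dis_le ::
    "real \<Rightarrow> ('y \<Rightarrow> 'x) \<Rightarrow> 'y set \<Rightarrow> ('y \<Rightarrow> 'y \<Rightarrow> real) \<Rightarrow> 'x set \<Rightarrow> ('x \<Rightarrow> 'x \<Rightarrow> real) \<Rightarrow> bool" where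
  "onto_dis_le c \<phi> Y dY X dX \<longleftrightarrow> \<phi> ` Y = X \<and> (\<forall>y\<in>Y. \<forall>y'\<in>Y. \<bar>dX (\<phi> y) (\<phi> y') - dY y y'\<bar> \<le> c)"

lemma onto_dis_le_mono: "onto_dis_le c \<phi> Y dY X dX \<Longrightarrow> c \<le> c' \<Longrightarrow> onto_dis_le c' \<phi> Y dY X dX"
  unfolding onto_dis_le_def by force

lemma Metric_space_pullback:
  assumes "Metric_space S d" "inj_on g S'" "g ` S' \<subseteq> S"
  shows "Metric_space S' (\<lambda>x y. d (g x) (g y))"
proof -
  interpret Metric_space S d by fact
  show ?thesis
  proof
    fix x y assume "x \<in> S'" "y \<in> S'"
    moreover from this have "g x \<in> S" "g y \<in> S" using assms(3) by auto
    ultimately show "d (g x) (g y) = 0 \<longleftrightarrow> x = y"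
      using assms(2) by (simp add: inj_on_eq_iff)
  next
    fix x y z assume "x \<in> S'" "y \<in> S'" "z \<in> S'"
    then show "d (g x) (g z) \<le> d (g x) (g y) + d (g y) (g z)"
      using assms(3) by (intro triangle) auto
  qed (auto simp: commute)
qed

locale onto_dis_le_gluing =
  MX: Metric_space X dX + MY: Metric_space Y dY for X dX Y dY +
  fixes \<phi> h
  assumes map: "onto_dis_le (2*h) \<phi> Y dY X dX" and h_pos: "0 < h" and Y_ne: "Y \<noteq> {}"
begin

lemma onto: "\<phi> ` Y = X"
  using map unfolding onto_dis_le_def by blast

lemma dis: "y \<in> Y \<Longrightarrow> y' \<in> Y \<Longrightarrow> \<bar>dX (\<phi> y) (\<phi> y') - dY y y'\<bar> \<le> 2*h"
  using map unfolding onto_dis_le_def by blast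

definition link where "link x y = (INF y'\<in>Y. dX x (\<phi> y') + dY y' y)"

lemma link_le: "y' \<in> Y \<Longrightarrow> link x y \<le> dX x (\<phi> y') + dY y' y"
  unfolding link_def by (rule cINF_lower) (auto intro: bdd_belowI2[where m=0])

lemma le_link: "(\<And>y'. y' \<in> Y \<Longrightarrow> c \<le> dX x (\<phi> y') + dY y' y) \<Longrightarrow> c \<le> link x y"
  unfolding link_def using Y_ne by (rule cINF_greatest)

lemma le_link_add:
  assumes "\<And>y1 y2. y1 \<in> Y \<Longrightarrow> y2 \<in> Y \<Longrightarrow> c \<le> dX x (\<phi> y1) + dY y1 y + (dX x' (\<phi> y2) + dY y2 y')"
  shows "c \<le> link x y + link x' y'"
proof -
  have "c - link x' y' \<le> link x y"
  proof (rule le_link)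
    fix y1 assume "y1 \<in> Y"
    have "c - (dX x (\<phi> y1) + dY y1 y) \<le> link x' y'"
      by (rule le_link) (use assms \<open>y1 \<in> Y\<close> in force)
    then show "c - link x' y' \<le> dX x (\<phi> y1) + dY y1 y" by simp
  qed
  then show ?thesis by simp
qed

lemma link_nonneg: "0 \<le> link x y"
  by (rule le_link) simp

lemma link_self: "y \<in> Y \<Longrightarrow> link (\<phi> y) y = 0"
  using link_le[of y "\<phi> y" y] link_nonneg[of "\<phi> y" y] onto by auto

lemma phi_in: "y \<in> Y \<Longrightarrow> \<phi> y \<in> X"
  using onto by blast

lemma link_le_dX: "x \<in> X \<Longrightarrow> x' \<in> X \<Longrightarrow> link x y \<le> dX x x' + link x' y"
  using le_link[where x=x' and y=y and c="link x y - dX x x'"] link_le[of _ x y] MX.triangle[of x x'] phi_in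
  by force

lemma link_le_dY: "y \<in> Y \<Longrightarrow> y' \<in> Y \<Longrightarrow> link x y' \<le> link x y + dY y y'"
  using le_link[where x=x and y=y and c="link x y' - dY y y'"] link_le[of _ x y'] MY.triangle[of _ y y']
  by force

lemma dX_le_link: "x \<in> X \<Longrightarrow> x' \<in> X \<Longrightarrow> y \<in> Y \<Longrightarrow> dX x x' \<le> 2*h + (link x y + link x' y)"
proof -
  assume x: "x \<in> X" "x' \<in> X" and "y \<in> Y"
  have "dX x x' - 2*h \<le> link x y + link x' y"
  proof (rule le_link_add)
    fix y1 y2 assume y: "y1 \<in> Y" "y2 \<in> Y"
    have "dX x x' \<le> dX x (\<phi> y1) + dX (\<phi> y1) (\<phi> y2) + dX (\<phi> y2) x'"
      using MX.triangle[of x "\<phi> y1" x'] MX.triangle[of "\<phi> y1" "\<phi> y2" x'] x y phi_in by force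
    moreover have "dX (\<phi> y1) (\<phi> y2) \<le> dY y1 y + dY y y2 + 2*h"
      using dis[OF y] MY.triangle[of y1 y y2] y \<open>y \<in> Y\<close> by (simp add: abs_le_iff)
    ultimately show "dX x x' - 2*h \<le> dX x (\<phi> y1) + dY y1 y + (dX x' (\<phi> y2) + dY y2 y)"
      using MX.commute[of x' "\<phi> y2"] MY.commute[of y y2] by linarith
  qed
  then show ?thesis by simp
qed

lemma dY_le_link: "x \<in> X \<Longrightarrow> y \<in> Y \<Longrightarrow> y' \<in> Y \<Longrightarrow> dY y y' \<le> 2*h + (link x y + link x y')"
proof -
  assume "x \<in> X" and y: "y \<in> Y" "y' \<in> Y"
  have "dY y y' - 2*h \<le> link x y + link x y'"
  proof (rule le_link_add)
    fix y1 y2 assume y12: "y1 \<in> Y" "y2 \<in> Y"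
    have "dY y y' \<le> dY y y1 + dY y1 y2 + dY y2 y'"
      using MY.triangle[of y y1 y'] MY.triangle[of y1 y2 y'] y y12 by force
    moreover have "dY y1 y2 \<le> dX (\<phi> y1) x + dX x (\<phi> y2) + 2*h"
      using dis[OF y12] MX.triangle[of "\<phi> y1" x "\<phi> y2"] y12 \<open>x \<in> X\<close> phi_in by (simp add: abs_le_iff)
    ultimately show "dY y y' - 2*h \<le> dX x (\<phi> y1) + dY y1 y + (dX x (\<phi> y2) + dY y2 y')"
      using MX.commute[of "\<phi> y1" x] MY.commute[of y y1] by linarith
  qed
  then show ?thesis by simp
qed

fun union_dist where
  "union_dist (Inl x) (Inl x') = dX x x'"
| "union_dist (Inr y) (Inr y') = dY y y'"
| "union_dist (Inl x) (Inr y) = h + link x y"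
| "union_dist (Inr y) (Inl x) = h + link x y"

lemma Metric_space_union_dist: "Metric_space (X <+> Y) union_dist"
proof
  fix p q
  show "0 \<le> union_dist p q"
    using h_pos link_nonneg by (cases p; cases q) (auto intro: add_nonneg_nonneg)
  show "union_dist p q = union_dist q p"
    using MX.commute MY.commute by (cases p; cases q) auto
next
  fix p q assume "p \<in> X <+> Y" "q \<in> X <+> Y"
  then show "union_dist p q = 0 \<longleftrightarrow> p = q"
    using h_pos link_nonneg by (elim PlusE) (auto simp: add_nonneg_eq_0_iff)
next
  fix p q w assume "p \<in> X <+> Y" "q \<in> X <+> Y" "w \<in> X <+> Y"
  then show "union_dist p w \<le> union_dist p q + union_dist q w"
    using MX.triangle MY.triangle link_le_dX link_le_dY dX_le_link dY_le_link MX.commute MY.commute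
    by (elim PlusE) (auto simp: algebra_simps, metis MX.commute, metis MY.commute)
qed

lemma hausdorff_dist_union_dist: "hausdorff_dist union_dist (Inl ` X) (Inr ` Y) \<le> ereal h"
proof -
  have "(INF b\<in>Inr ` Y. ereal (union_dist (Inl (\<phi> y)) b)) \<le> ereal h" if "y \<in> Y" for y
    using that link_self by (intro INF_lower2[of "Inr y"]) auto
  moreover have "(INF a\<in>Inl ` X. ereal (union_dist a (Inr y))) \<le> ereal h" if "y \<in> Y" for y
    using that phi_in link_self by (intro INF_lower2[of "Inl (\<phi> y)"]) auto
  ultimately show ?thesis
    unfolding hausdorff_dist_def using onto by (auto intro!: SUP_least)
qed

lemma dGH_le: "dGH X dX Y dY \<le> ereal h"
  unfolding dGH_def
  by (rule INF_lower2[of union_dist]) (auto simp: Metric_space_union_dist hausdorff_dist_union_dist)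

end

lemma dGH_le_of_onto_dis_le:
  assumes "Metric_space X dX" "Metric_space Y dY" "onto_dis_le (2*h) \<phi> Y dY X dX" "0 \<le> h"
  shows "dGH X dX Y dY \<le> ereal h"
proof (cases "Y = {}")
  case True
  then have "X = {}" using assms(3) by (simp add: onto_dis_le_def)
  have "Metric_space (X <+> Y) (\<lambda>_ _. 0)" using True \<open>X = {}\<close> by unfold_locales auto
  then have "dGH X dX Y dY \<le> hausdorff_dist (\<lambda>_ _. 0) (Inl ` X) (Inr ` Y)"
    unfolding dGH_def using True \<open>X = {}\<close> by (intro INF_lower) auto
  also have "\<dots> = bot" using True \<open>X = {}\<close> by (simp add: hausdorff_dist_def)
  finally show ?thesis by (rule order_trans) simp
next
  case False
  show ?thesis
  proof (rule ereal_le_epsilon2)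
    fix e :: real assume "0 < e"
    have "onto_dis_le_gluing X dX Y dY \<phi> (h + e)"
      using assms False \<open>0 < e\<close> onto_dis_le_mono[OF assms(3), of "2*(h + e)"]
      by (intro onto_dis_le_gluing.intro onto_dis_le_gluing_axioms.intro) auto
    then show "dGH X dX Y dY \<le> ereal h + ereal e"
      using onto_dis_le_gluing.dGH_le by fastforce
  qed
qed

lemma hausdorff_dist_lessD:
  assumes "hausdorff_dist d A B < ereal h"
  shows "a \<in> A \<Longrightarrow> \<exists>b\<in>B. d a b < h" and "b \<in> B \<Longrightarrow> \<exists>a\<in>A. d a b < h"
proof -
  have "(SUP a\<in>A. INF b\<in>B. ereal (d a b)) < ereal h" "(SUP b\<in>B. INF a\<in>A. ereal (d a b)) < ereal h"
    using assms unfolding hausdorff_dist_def by simp_all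
  then show "a \<in> A \<Longrightarrow> \<exists>b\<in>B. d a b < h" and "b \<in> B \<Longrightarrow> \<exists>a\<in>A. d a b < h"
    by (auto simp: INF_less_iff dest!: SUP_lessD)
qed

lemma dGH_less_imp_onto_dis_le:
  assumes "dGH X dX Y dY < ereal h"
    and sep: "\<And>x x'. x \<in> X \<Longrightarrow> x' \<in> X \<Longrightarrow> x \<noteq> x' \<Longrightarrow> 2*h < dX x x'"
  shows "\<exists>\<phi>. onto_dis_le (2*h) \<phi> Y dY X dX"
proof -
  obtain dZ where "Metric_space (X <+> Y) dZ"
    and dZ_X: "\<forall>x\<in>X. \<forall>x'\<in>X. dZ (Inl x) (Inl x') = dX x x'"
    and dZ_Y: "\<forall>y\<in>Y. \<forall>y'\<in>Y. dZ (Inr y) (Inr y') = dY y y'"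
    and H: "hausdorff_dist dZ (Inl ` X) (Inr ` Y) < ereal h"
    using assms(1) unfolding dGH_def by (auto simp: INF_less_iff)
  then interpret Z: Metric_space "X <+> Y" dZ
    by simp
  have near_Y: "\<exists>y\<in>Y. dZ (Inl x) (Inr y) < h" if "x \<in> X" for x
    using hausdorff_dist_lessD(1)[OF H] that by blast
  have near_X: "\<exists>x\<in>X. dZ (Inl x) (Inr y) < h" if "y \<in> Y" for y
    using hausdorff_dist_lessD(2)[OF H] that by blast
  define \<phi> where "\<phi> y = (SOME x. x \<in> X \<and> dZ (Inl x) (Inr y) < h)" for y
  have \<phi>: "\<phi> y \<in> X" "dZ (Inl (\<phi> y)) (Inr y) < h" if "y \<in> Y" for y
    using someI_ex[OF near_X[OF that, unfolded Bex_def]] unfolding \<phi>_def by blast+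
  have "\<bar>dX (\<phi> y) (\<phi> y') - dY y y'\<bar> \<le> 2*h" if y: "y \<in> Y" "y' \<in> Y" for y y'
  proof -
    have "dZ (Inl (\<phi> y)) (Inl (\<phi> y'))
        \<le> dZ (Inl (\<phi> y)) (Inr y) + dZ (Inr y) (Inr y') + dZ (Inr y') (Inl (\<phi> y'))"
      using Z.triangle[of "Inl (\<phi> y)" "Inr y" "Inl (\<phi> y')"]
        Z.triangle[of "Inr y" "Inr y'" "Inl (\<phi> y')"] \<phi> y
      by fastforce
    moreover have "dZ (Inr y) (Inr y')
        \<le> dZ (Inr y) (Inl (\<phi> y)) + dZ (Inl (\<phi> y)) (Inl (\<phi> y')) + dZ (Inl (\<phi> y')) (Inr y')"
      using Z.triangle[of "Inr y" "Inl (\<phi> y)" "Inr y'"]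
        Z.triangle[of "Inl (\<phi> y)" "Inl (\<phi> y')" "Inr y'"] \<phi> y
      by fastforce
    ultimately show ?thesis
      using \<phi>[OF y(1)] \<phi>[OF y(2)] dZ_X dZ_Y y
        Z.commute[of "Inr y" "Inl (\<phi> y)"] Z.commute[of "Inr y'" "Inl (\<phi> y')"]
      by (simp add: abs_le_iff)
  qed
  moreover have "\<phi> ` Y = X"
  proof
    show "\<phi> ` Y \<subseteq> X" using \<phi> by blast
    show "X \<subseteq> \<phi> ` Y"
    proof
      fix x assume "x \<in> X"
      then obtain y where y: "y \<in> Y" "dZ (Inl x) (Inr y) < h" using near_Y by blast
      have "dX x (\<phi> y) \<le> dZ (Inl x) (Inr y) + dZ (Inr y) (Inl (\<phi> y))"
        using Z.triangle[of "Inl x" "Inr y" "Inl (\<phi> y)"] dZ_X \<open>x \<in> X\<close> \<phi> y by fastforce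
      then have "dX x (\<phi> y) \<le> 2*h" using \<phi>[OF y(1)] y(2) Z.commute[of "Inr y"] by simp
      then have "x = \<phi> y" using sep[OF \<open>x \<in> X\<close> \<phi>(1)[OF y(1)]] by force
      then show "x \<in> \<phi> ` Y" using y by blast
    qed
  qed
  ultimately show ?thesis unfolding onto_dis_le_def by blast
qed

section \<open>Invariance under isometries\<close>

lemma dGH_commute_le:
  fixes X :: "'x set" and Y :: "'y set"
  shows "dGH Y dY X dX \<le> dGH X dX Y dY"
  unfolding dGH_def
proof (rule INF_greatest)
  fix dZ assume "dZ \<in> {dZ. Metric_space (X <+> Y) dZ \<and>
        (\<forall>x\<in>X. \<forall>x'\<in>X. dZ (Inl x) (Inl x') = dX x x') \<and>
        (\<forall>y\<in>Y. \<forall>y'\<in>Y. dZ (Inr y) (Inr y') = dY y y')}"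
  then have MZ: "Metric_space (X <+> Y) dZ"
    and dZ: "\<forall>x\<in>X. \<forall>x'\<in>X. dZ (Inl x) (Inl x') = dX x x'" "\<forall>y\<in>Y. \<forall>y'\<in>Y. dZ (Inr y) (Inr y') = dY y y'"
    by blast+
  define swap :: "'y + 'x \<Rightarrow> 'x + 'y" where "swap = case_sum Inr Inl"
  have "inj_on swap (Y <+> X)"
    by (rule inj_onI) (auto simp: swap_def split: sum.splits)
  moreover have "swap ` (Y <+> X) \<subseteq> X <+> Y"
    by (auto simp: swap_def)
  ultimately have "Metric_space (Y <+> X) (\<lambda>p q. dZ (swap p) (swap q))"
    by (rule Metric_space_pullback[OF MZ])
  moreover have "hausdorff_dist (\<lambda>p q. dZ (swap p) (swap q)) (Inl ` Y) (Inr ` X)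
      = hausdorff_dist dZ (Inl ` X) (Inr ` Y)"
    using Metric_space.commute[OF MZ]
    by (simp add: hausdorff_dist_def swap_def image_image max.commute)
  ultimately show "(INF dW\<in>{dW. Metric_space (Y <+> X) dW \<and>
        (\<forall>y\<in>Y. \<forall>y'\<in>Y. dW (Inl y) (Inl y') = dY y y') \<and>
        (\<forall>x\<in>X. \<forall>x'\<in>X. dW (Inr x) (Inr x') = dX x x')}. hausdorff_dist dW (Inl ` Y) (Inr ` X))
     \<le> hausdorff_dist dZ (Inl ` X) (Inr ` Y)"
    using dZ by (intro INF_lower2[of "\<lambda>p q. dZ (swap p) (swap q)"]) (simp_all add: swap_def)
qed

lemma dGH_commute: "dGH X dX Y dY = dGH Y dY X dX"
  by (intro antisym dGH_commute_le)

lemma isometric_sym: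
  assumes "isometric X dX Y dY"
  shows "isometric Y dY X dX"
proof -
  obtain f where f: "bij_betw f X Y" "\<And>x x'. x \<in> X \<Longrightarrow> x' \<in> X \<Longrightarrow> dY (f x) (f x') = dX x x'"
    using assms unfolding isometric_def by blast
  have Y: "Y = f ` X" using bij_betw_imp_surj_on[OF f(1)] by simp
  have "dX (inv_into X f y) (inv_into X f y') = dY y y'" if "y \<in> Y" "y' \<in> Y" for y y'
    using f(2)[of "inv_into X f y" "inv_into X f y'"] that
    unfolding Y by (simp add: inv_into_into f_inv_into_f)
  then show ?thesis
    unfolding isometric_def using bij_betw_inv_into[OF f(1)] by blast
qed

lemma isometric_trans:
  assumes "isometric X dX Y dY" "isometric Y dY Z dZ"
  shows "isometric X dX Z dZ"
proof -
  obtain f where f: "bij_betw f X Y" "\<And>x x'. x \<in> X \<Longrightarrow> x' \<in> X \<Longrightarrow> dY (f x) (f x') = dX x x'"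
    using assms(1) unfolding isometric_def by blast
  obtain g where g: "bij_betw g Y Z" "\<And>y y'. y \<in> Y \<Longrightarrow> y' \<in> Y \<Longrightarrow> dZ (g y) (g y') = dY y y'"
    using assms(2) unfolding isometric_def by blast
  have "\<forall>x\<in>X. \<forall>x'\<in>X. dZ ((g \<circ> f) x) ((g \<circ> f) x') = dX x x'"
    by (simp add: f(2) g(2) bij_betw_apply[OF f(1)])
  then show ?thesis
    unfolding isometric_def using bij_betw_trans[OF f(1) g(1)] by blast
qed

lemma isometric_image:
  "inj_on g S \<Longrightarrow> X \<subseteq> S \<Longrightarrow> isometric X d (g ` X) (\<lambda>x y. d (inv_into S g x) (inv_into S g y))"
  unfolding isometric_def
  by (intro exI[of _ g]) (auto simp: inj_on_subset inj_on_imp_bij_betw subsetD)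

lemma Metric_space_image:
  "Metric_space X d \<Longrightarrow> inj_on g S \<Longrightarrow> X \<subseteq> S \<Longrightarrow>
    Metric_space (g ` X) (\<lambda>x y. d (inv_into S g x) (inv_into S g y))"
  by (erule Metric_space_pullback) (auto intro: inj_on_inv_into simp: subsetD)

lemma dGH_le_isometric:
  fixes X :: "'x set" and Y :: "'y set" and Y' :: "'y' set"
  assumes "isometric Y' dY' Y dY"
  shows "dGH X dX Y' dY' \<le> dGH X dX Y dY"
  unfolding dGH_def
proof (rule INF_greatest)
  fix dZ assume "dZ \<in> {dZ. Metric_space (X <+> Y) dZ \<and>
        (\<forall>x\<in>X. \<forall>x'\<in>X. dZ (Inl x) (Inl x') = dX x x') \<and>
        (\<forall>y\<in>Y. \<forall>y'\<in>Y. dZ (Inr y) (Inr y') = dY y y')}"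
  then have MZ: "Metric_space (X <+> Y) dZ"
    and dZ: "\<forall>x\<in>X. \<forall>x'\<in>X. dZ (Inl x) (Inl x') = dX x x'" "\<forall>y\<in>Y. \<forall>y'\<in>Y. dZ (Inr y) (Inr y') = dY y y'"
    by blast+
  obtain f where f: "bij_betw f Y' Y" "\<And>y y'. y \<in> Y' \<Longrightarrow> y' \<in> Y' \<Longrightarrow> dY (f y) (f y') = dY' y y'"
    using assms unfolding isometric_def by blast
  define g :: "'x + 'y' \<Rightarrow> 'x + 'y" where "g = map_sum id f"
  have "inj_on g (X <+> Y')"
    using f(1) by (intro inj_onI) (auto simp: g_def bij_betw_def inj_on_eq_iff)
  moreover have "g ` (X <+> Y') \<subseteq> X <+> Y"
    using bij_betw_apply[OF f(1)] by (auto simp: g_def)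
  ultimately have "Metric_space (X <+> Y') (\<lambda>p q. dZ (g p) (g q))"
    by (rule Metric_space_pullback[OF MZ])
  moreover have "hausdorff_dist (\<lambda>p q. dZ (g p) (g q)) (Inl ` X) (Inr ` Y')
      = hausdorff_dist dZ (Inl ` X) (Inr ` f ` Y')"
    by (simp add: hausdorff_dist_def g_def image_image)
  ultimately show "(INF dW\<in>{dW. Metric_space (X <+> Y') dW \<and>
        (\<forall>x\<in>X. \<forall>x'\<in>X. dW (Inl x) (Inl x') = dX x x') \<and>
        (\<forall>y\<in>Y'. \<forall>y'\<in>Y'. dW (Inr y) (Inr y') = dY' y y')}. hausdorff_dist dW (Inl ` X) (Inr ` Y'))
     \<le> hausdorff_dist dZ (Inl ` X) (Inr ` Y)"
    using dZ f(2) bij_betw_apply[OF f(1)] bij_betw_imp_surj_on[OF f(1)]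
    by (intro INF_lower2[of "\<lambda>p q. dZ (g p) (g q)"]) (simp_all add: g_def)
qed

lemma dGH_isometric: "isometric Y' dY' Y dY \<Longrightarrow> dGH X dX Y' dY' = dGH X dX Y dY"
  by (metis antisym dGH_le_isometric isometric_sym)

definition GH_continuous_on :: "real set \<Rightarrow> (real \<Rightarrow> 'a set \<times> ('a \<Rightarrow> 'a \<Rightarrow> real)) \<Rightarrow> bool" where
  "GH_continuous_on A \<gamma> \<longleftrightarrow> (\<forall>t\<in>A. \<forall>\<epsilon>>0. \<exists>\<delta>>0. \<forall>u\<in>A. \<bar>u - t\<bar> < \<delta> \<longrightarrow>
     dGH (fst (\<gamma> u)) (snd (\<gamma> u)) (fst (\<gamma> t)) (snd (\<gamma> t)) < ereal \<epsilon>)"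

lemma GH_continuous_onI_Lipschitz:
  assumes "0 < \<delta>\<^sub>0" "0 \<le> C"
    and "\<And>u t. u \<in> A \<Longrightarrow> t \<in> A \<Longrightarrow> \<bar>u - t\<bar> < \<delta>\<^sub>0 \<Longrightarrow>
           dGH (fst (\<gamma> u)) (snd (\<gamma> u)) (fst (\<gamma> t)) (snd (\<gamma> t)) \<le> ereal (C * \<bar>u - t\<bar>)"
  shows "GH_continuous_on A \<gamma>"
  unfolding GH_continuous_on_def
proof (intro ballI allI impI)
  fix t \<epsilon> :: real assume "t \<in> A" "0 < \<epsilon>"
  show "\<exists>\<delta>>0. \<forall>u\<in>A. \<bar>u - t\<bar> < \<delta> \<longrightarrow> dGH (fst (\<gamma> u)) (snd (\<gamma> u)) (fst (\<gamma> t)) (snd (\<gamma> t)) < ereal \<epsilon>"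
  proof (intro exI conjI ballI impI)
    show "0 < min \<delta>\<^sub>0 (\<epsilon> / (C + 1))" using assms \<open>0 < \<epsilon>\<close> by simp
    fix u assume "u \<in> A" and close: "\<bar>u - t\<bar> < min \<delta>\<^sub>0 (\<epsilon> / (C + 1))"
    have "C * \<bar>u - t\<bar> \<le> (C + 1) * \<bar>u - t\<bar>" by (simp add: distrib_right)
    also have "\<dots> < \<epsilon>" using close assms(2) by (simp add: pos_less_divide_eq mult.commute)
    finally have "ereal (C * \<bar>u - t\<bar>) < ereal \<epsilon>" by simp
    moreover have "dGH (fst (\<gamma> u)) (snd (\<gamma> u)) (fst (\<gamma> t)) (snd (\<gamma> t)) \<le> ereal (C * \<bar>u - t\<bar>)"
      using assms(3)[OF \<open>u \<in> A\<close> \<open>t \<in> A\<close>] close by simp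
    ultimately show "dGH (fst (\<gamma> u)) (snd (\<gamma> u)) (fst (\<gamma> t)) (snd (\<gamma> t)) < ereal \<epsilon>"
      by (meson le_less_trans)
  qed
qed

lemma GH_continuous_on_isometric:
  assumes "GH_continuous_on A \<gamma>"
    and "\<And>t. t \<in> A \<Longrightarrow> isometric (fst (\<gamma> t)) (snd (\<gamma> t)) (fst (\<gamma>' t)) (snd (\<gamma>' t))"
  shows "GH_continuous_on A \<gamma>'"
proof -
  have "dGH (fst (\<gamma>' u)) (snd (\<gamma>' u)) (fst (\<gamma>' t)) (snd (\<gamma>' t))
      = dGH (fst (\<gamma> u)) (snd (\<gamma> u)) (fst (\<gamma> t)) (snd (\<gamma> t))" if "u \<in> A" "t \<in> A" for u t
    using dGH_isometric[OF assms(2)[OF that(1)]] dGH_isometric[OF assms(2)[OF that(2)]]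
    by (metis dGH_commute)
  then show ?thesis
    using assms(1) unfolding GH_continuous_on_def by simp
qed

section \<open>Rigidity of generic spaces\<close>

lemma dist_gt_if_less_s_inv:
  assumes "ereal c < s_inv M d" "x \<in> M" "x' \<in> M" "x \<noteq> x'"
  shows "c < d x x'"
proof -
  have "s_inv M d \<le> ereal (d x x')"
    unfolding s_inv_def by (rule INF_lower2[of "(x, x')"]) (use assms in auto)
  then have "ereal c < ereal (d x x')" by (rule less_le_trans[OF assms(1)])
  then show ?thesis by simp
qed

lemma defect_gt_if_less_t_inv:
  assumes "ereal c < t_inv M d" "x \<in> M" "y \<in> M" "z \<in> M" "x \<noteq> y" "y \<noteq> z" "x \<noteq> z"
  shows "c < d x y + d y z - d x z"
proof -
  have "t_inv M d \<le> ereal (d x y + d y z - d x z)"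
    unfolding t_inv_def by (rule INF_lower2[of "(x, y, z)"]) (use assms in auto)
  then have "ereal c < ereal (d x y + d y z - d x z)" by (rule less_le_trans[OF assms(1)])
  then show ?thesis by simp
qed

lemma bij_fixes_if_distortion_less_e_inv:
  assumes "bij_betw \<sigma> M M" "distortion M d \<sigma> < e_inv M d" "x \<in> M"
  shows "\<sigma> x = x"
proof (rule ccontr)
  assume "\<sigma> x \<noteq> x"
  then have "e_inv M d \<le> distortion M d \<sigma>"
    unfolding e_inv_def using assms(1,3) by (intro INF_lower) auto
  then show False using assms(2) by simp
qed

lemma onto_dis_le_unique:
  assumes "Metric_space M dM"
    and \<phi>: "onto_dis_le a \<phi> X \<rho> M dM" and \<psi>: "onto_dis_le b \<psi> X \<rho> M dM"
    and s: "ereal (a + b) < s_inv M dM" and e: "ereal (a + b) < e_inv M dM"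
    and "x \<in> X"
  shows "\<phi> x = \<psi> x"
proof -
  interpret Metric_space M dM by fact
  have \<phi>X: "\<phi> ` X = M" and \<psi>X: "\<psi> ` X = M"
    using \<phi> \<psi> unfolding onto_dis_le_def by auto
  have close: "\<bar>dM (\<phi> x) (\<phi> x') - dM (\<psi> x) (\<psi> x')\<bar> \<le> a + b" if "x \<in> X" "x' \<in> X" for x x'
    using \<phi> \<psi> that unfolding onto_dis_le_def by (smt (verit, best))
  have eq: "m = m'" if "m \<in> M" "m' \<in> M" "dM m m' \<le> a + b" for m m'
    using dist_gt_if_less_s_inv[OF s that(1,2)] that(3) by force
  define \<sigma> where "\<sigma> = \<psi> \<circ> inv_into X \<phi>"
  have \<sigma>: "\<sigma> (\<phi> x) = \<psi> x" if "x \<in> X" for x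
  proof -
    define x' where "x' = inv_into X \<phi> (\<phi> x)"
    have x': "x' \<in> X" "\<phi> x' = \<phi> x"
      unfolding x'_def using that by (auto intro: inv_into_into f_inv_into_f)
    have "dM (\<psi> x') (\<psi> x) \<le> a + b"
      using close[OF x'(1) that] x' \<phi>X that by auto
    then have "\<psi> x' = \<psi> x"
      using eq \<psi>X x'(1) that by blast
    then show ?thesis unfolding \<sigma>_def x'_def by simp
  qed
  have "bij_betw \<sigma> M M"
  proof (rule bij_betw_imageI)
    show "inj_on \<sigma> M"
    proof
      fix m m' assume "m \<in> M" "m' \<in> M" "\<sigma> m = \<sigma> m'"
      then obtain x x' where x: "x \<in> X" "x' \<in> X" "m = \<phi> x" "m' = \<phi> x'" "\<psi> x = \<psi> x'"
        using \<phi>X \<sigma> by (metis imageE)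
      moreover have "\<psi> x' \<in> M" using \<psi>X x(2) by blast
      ultimately have "dM m m' \<le> a + b"
        using close[OF x(1,2)] by simp
      then show "m = m'"
        using eq \<open>m \<in> M\<close> \<open>m' \<in> M\<close> by blast
    qed
    have "\<sigma> ` M = (\<lambda>x. \<sigma> (\<phi> x)) ` X"
      unfolding \<phi>X[symmetric] image_image ..
    also have "\<dots> = M"
      using \<sigma> \<psi>X by (simp cong: image_cong)
    finally show "\<sigma> ` M = M" .
  qed
  moreover have "distortion M dM \<sigma> \<le> ereal (a + b)"
    unfolding distortion_def
  proof (rule SUP_least)
    fix p assume "p \<in> M \<times> M"
    then obtain x x' where "x \<in> X" "x' \<in> X" "p = (\<phi> x, \<phi> x')" using \<phi>X by auto
    then show "ereal \<bar>dM (fst p) (snd p) - dM (\<sigma> (fst p)) (\<sigma> (snd p))\<bar> \<le> ereal (a + b)"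
      using close \<sigma> by simp
  qed
  ultimately have "\<sigma> (\<phi> x) = \<phi> x"
    using bij_fixes_if_distortion_less_e_inv \<phi>X \<open>x \<in> X\<close> e by (meson image_eqI le_less_trans)
  then show ?thesis
    using \<sigma> \<open>x \<in> X\<close> by simp
qed

lemma dGH_eq_imp_onto_dis_le:
  assumes "Metric_space M dM" and "dGH M dM Y dY = ereal r" and "0 \<le> r"
    and "ereal (4*r) < s_inv M dM" and "ereal (4*r) < e_inv M dM"
  shows "\<exists>\<phi>. onto_dis_le (2*r) \<phi> Y dY M dM"
proof -
  obtain L where "ereal (4*r) < ereal L" and s: "ereal L < s_inv M dM" and e: "ereal L < e_inv M dM"
    using ereal_dense2[of "ereal (4*r)" "min (s_inv M dM) (e_inv M dM)"] assms(4,5) by auto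
  define \<eta> where "\<eta> = (L - 4*r) / 4"
  have "0 < \<eta>" using \<open>ereal (4*r) < ereal L\<close> unfolding \<eta>_def by simp
  have L: "L = 4*r + 4*\<eta>" unfolding \<eta>_def by (simp add: field_simps)
  have approx: "\<exists>\<phi>. onto_dis_le (2*(r + \<epsilon>)) \<phi> Y dY M dM" if "0 < \<epsilon>" "\<epsilon> \<le> \<eta>" for \<epsilon>
  proof (rule dGH_less_imp_onto_dis_le)
    show "dGH M dM Y dY < ereal (r + \<epsilon>)" using assms(2) that by simp
    show "2*(r + \<epsilon>) < dM m m'" if "m \<in> M" "m' \<in> M" "m \<noteq> m'" for m m'
      using dist_gt_if_less_s_inv[OF s that] L \<open>\<epsilon> \<le> \<eta>\<close> \<open>0 < \<epsilon>\<close> \<open>0 \<le> r\<close> by simp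
  qed
  obtain \<phi> where \<phi>: "onto_dis_le (2*(r + \<eta>)) \<phi> Y dY M dM"
    using approx[OF \<open>0 < \<eta>\<close> order_refl] by blast
  have \<phi>_dis: "\<bar>dM (\<phi> y) (\<phi> y') - dY y y'\<bar> \<le> 2*(r + \<epsilon>)"
    if \<epsilon>: "0 < \<epsilon>" "\<epsilon> \<le> \<eta>" and y: "y \<in> Y" "y' \<in> Y" for \<epsilon> y y'
  proof -
    obtain \<psi> where \<psi>: "onto_dis_le (2*(r + \<epsilon>)) \<psi> Y dY M dM"
      using approx[OF \<epsilon>] by blast
    have "ereal (2*(r + \<eta>) + 2*(r + \<epsilon>)) \<le> ereal L"
      using L \<epsilon>(2) by simp
    then have "\<phi> y = \<psi> y" if "y \<in> Y" for y
      using onto_dis_le_unique[OF assms(1) \<phi> \<psi> _ _ that] s e by (meson le_less_trans)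
    then show ?thesis using \<psi> y unfolding onto_dis_le_def by simp
  qed
  have "\<bar>dM (\<phi> y) (\<phi> y') - dY y y'\<bar> \<le> 2*r" if "y \<in> Y" "y' \<in> Y" for y y'
  proof (rule field_le_epsilon)
    fix e :: real assume "0 < e"
    then have "\<bar>dM (\<phi> y) (\<phi> y') - dY y y'\<bar> \<le> 2*(r + min \<eta> (e/2))"
      using \<phi>_dis that \<open>0 < \<eta>\<close> by simp
    also have "\<dots> \<le> 2*r + e" by (simp add: min_def)
    finally show "\<bar>dM (\<phi> y) (\<phi> y') - dY y y'\<bar> \<le> 2*r + e" .
  qed
  then show ?thesis
    using \<phi> unfolding onto_dis_le_def by blast
qed

lemma dGH_eq_if_subspace:
  assumes MM: "Metric_space M dM" and MS: "Metric_space S \<rho>"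
    and I: "onto_dis_le (2*r) I S \<rho> M dM" and "Y \<subseteq> S" "I ` Y = M"
    and dGH_Y: "dGH M dM Y \<rho> = ereal r" and "0 < r"
    and s: "ereal (4*r) < s_inv M dM" and e: "ereal (4*r) < e_inv M dM"
  shows "dGH M dM S \<rho> = ereal r"
proof (rule antisym)
  show "dGH M dM S \<rho> \<le> ereal r"
    using dGH_le_of_onto_dis_le[OF MM MS I] \<open>0 < r\<close> by simp
  show "ereal r \<le> dGH M dM S \<rho>"
  proof (rule ccontr)
    assume "\<not> ereal r \<le> dGH M dM S \<rho>"
    then obtain h0 where h0: "dGH M dM S \<rho> < ereal h0" "h0 < r"
      using ereal_dense2[of "dGH M dM S \<rho>" "ereal r"] by (auto simp: not_le)
    define h where "h = max h0 0"
    have h: "dGH M dM S \<rho> < ereal h" "0 \<le> h" "h < r"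
      using h0 \<open>0 < r\<close> unfolding h_def by (auto intro: less_le_trans)
    obtain \<phi> where \<phi>: "onto_dis_le (2*h) \<phi> S \<rho> M dM"
      using dGH_less_imp_onto_dis_le[OF h(1)] dist_gt_if_less_s_inv[OF s] h by fastforce
    have "ereal (2*h + 2*r) \<le> ereal (4*r)" using h(3) by simp
    then have "\<phi> x = I x" if "x \<in> S" for x
      using onto_dis_le_unique[OF MM \<phi> I _ _ that] s e by (meson le_less_trans)
    then have "onto_dis_le (2*h) I Y \<rho> M dM"
      using \<phi> \<open>Y \<subseteq> S\<close> \<open>I ` Y = M\<close> unfolding onto_dis_le_def by (simp add: subset_iff)
    then have "dGH M dM Y \<rho> \<le> ereal h"
      using dGH_le_of_onto_dis_le MM Metric_space.subspace[OF MS \<open>Y \<subseteq> S\<close>] h(2) by blast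
    then show False using dGH_Y h(3) by simp
  qed
qed

section \<open>A path on the sphere\<close>

lemma abs_convex_comb3_le:
  fixes a b c x y z e k :: real
  assumes "0 \<le> a" "0 \<le> b" "0 \<le> c" "a + b + c = 1"
    and "\<bar>x - e\<bar> \<le> k" "\<bar>y - e\<bar> \<le> k" "\<bar>z - e\<bar> \<le> k"
  shows "\<bar>a*x + b*y + c*z - e\<bar> \<le> k"
proof -
  have a: "a = 1 - b - c" using assms(4) by simp
  have "a*x + b*y + c*z - e = a*(x - e) + b*(y - e) + c*(z - e)"
    unfolding a by (simp add: algebra_simps)
  also have "\<bar>\<dots>\<bar> \<le> \<bar>a*(x - e)\<bar> + \<bar>b*(y - e)\<bar> + \<bar>c*(z - e)\<bar>"
    by (rule order_trans[OF abs_triangle_ineq add_mono[OF abs_triangle_ineq order_refl]])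
  also have "\<dots> = a*\<bar>x - e\<bar> + b*\<bar>y - e\<bar> + c*\<bar>z - e\<bar>"
    using assms(1-3) by (simp add: abs_mult)
  also have "\<dots> \<le> a*k + b*k + c*k"
    using assms by (intro add_mono mult_left_mono) auto
  also have "\<dots> = k"
    unfolding a by (simp add: algebra_simps)
  finally show ?thesis .
qed

lemma Metric_space_weighted_sum:
  assumes "Metric_space S d" "Metric_space S1 d1" "Metric_space S2 d2"
    and "f1 ` S \<subseteq> S1" "f2 ` S \<subseteq> S2" and "0 \<le> a" "0 < b" "0 \<le> c"
  shows "Metric_space S (\<lambda>x y. a * d1 (f1 x) (f1 y) + b * d x y + c * d2 (f2 x) (f2 y))"
proof -
  interpret S: Metric_space S d by fact
  interpret S1: Metric_space S1 d1 by fact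
  interpret S2: Metric_space S2 d2 by fact
  show ?thesis
  proof
    fix x y
    show "0 \<le> a * d1 (f1 x) (f1 y) + b * d x y + c * d2 (f2 x) (f2 y)"
      using assms(6-8) by simp
    show "a * d1 (f1 x) (f1 y) + b * d x y + c * d2 (f2 x) (f2 y)
        = a * d1 (f1 y) (f1 x) + b * d y x + c * d2 (f2 y) (f2 x)"
      by (simp add: S.commute S1.commute S2.commute)
  next
    fix x y assume xy: "x \<in> S" "y \<in> S"
    show "a * d1 (f1 x) (f1 y) + b * d x y + c * d2 (f2 x) (f2 y) = 0 \<longleftrightarrow> x = y"
    proof
      assume "a * d1 (f1 x) (f1 y) + b * d x y + c * d2 (f2 x) (f2 y) = 0"
      moreover have "0 \<le> a * d1 (f1 x) (f1 y)" "0 \<le> b * d x y" "0 \<le> c * d2 (f2 x) (f2 y)"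
        using assms(6-8) by auto
      ultimately have "b * d x y = 0" by linarith
      then show "x = y" using xy \<open>0 < b\<close> by simp
    next
      assume "x = y"
      then show "a * d1 (f1 x) (f1 y) + b * d x y + c * d2 (f2 x) (f2 y) = 0"
        using xy assms(4,5) by (simp add: image_subset_iff)
    qed
  next
    fix x y z assume xyz: "x \<in> S" "y \<in> S" "z \<in> S"
    have "d1 (f1 x) (f1 z) \<le> d1 (f1 x) (f1 y) + d1 (f1 y) (f1 z)"
      using xyz assms(4) by (intro S1.triangle) auto
    then have "a * d1 (f1 x) (f1 z) \<le> a * d1 (f1 x) (f1 y) + a * d1 (f1 y) (f1 z)"
      using assms(6) by (simp add: mult_left_mono flip: distrib_left)
    moreover have "b * d x z \<le> b * d x y + b * d y z"
      using S.triangle[OF xyz] assms(7) by (simp add: mult_left_mono flip: distrib_left)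
    moreover have "d2 (f2 x) (f2 z) \<le> d2 (f2 x) (f2 y) + d2 (f2 y) (f2 z)"
      using xyz assms(5) by (intro S2.triangle) auto
    then have "c * d2 (f2 x) (f2 z) \<le> c * d2 (f2 x) (f2 y) + c * d2 (f2 y) (f2 z)"
      using assms(8) by (simp add: mult_left_mono flip: distrib_left)
    ultimately show "a * d1 (f1 x) (f1 z) + b * d x z + c * d2 (f2 x) (f2 z)
        \<le> a * d1 (f1 x) (f1 y) + b * d x y + c * d2 (f2 x) (f2 y) +
           (a * d1 (f1 y) (f1 z) + b * d y z + c * d2 (f2 y) (f2 z))"
      by linarith
  qed
qed

lemma inj_on_Plus_of_inj_on_product:
  assumes "inj_on g (A \<times> B \<times> C \<times> D)" "a0 \<in> A" "b0 \<in> B" "c0 \<in> C" "d0 \<in> D" "d1 \<in> D" "d0 \<noteq> d1"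
  shows "inj_on (case_sum (\<lambda>a. g (a, b0, c0, d0)) (\<lambda>b. g (a0, b, c0, d1))) (A <+> B)"
proof (rule inj_onI)
  fix p q assume "p \<in> A <+> B" "q \<in> A <+> B"
    and "case_sum (\<lambda>a. g (a, b0, c0, d0)) (\<lambda>b. g (a0, b, c0, d1)) p
       = case_sum (\<lambda>a. g (a, b0, c0, d0)) (\<lambda>b. g (a0, b, c0, d1)) q"
  then show "p = q"
    using assms by (elim PlusE) (auto dest: inj_onD)
qed

locale GH_sphere_pair =
  M: Metric_space M dM + Y1: Metric_space Y1 d1 + Y2: Metric_space Y2 d2
  for M :: "'m set" and dM and Y1 :: "'a set" and d1 and Y2 :: "'b set" and d2 +
  fixes r :: real and idx1 :: "'a \<Rightarrow> 'm" and idx2 :: "'b \<Rightarrow> 'm"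
  assumes r_pos: "0 < r"
    and s_bound: "ereal (4*r) < s_inv M dM" and e_bound: "ereal (4*r) < e_inv M dM"
    and t_bound: "ereal (2*r) < t_inv M dM"
    and dGH_Y1: "dGH M dM Y1 d1 = ereal r" and dGH_Y2: "dGH M dM Y2 d2 = ereal r"
    and idx1: "onto_dis_le (2*r) idx1 Y1 d1 M dM" and idx2: "onto_dis_le (2*r) idx2 Y2 d2 M dM"
begin

lemma dM_gt: "i \<in> M \<Longrightarrow> j \<in> M \<Longrightarrow> i \<noteq> j \<Longrightarrow> 4*r < dM i j"
  by (rule dist_gt_if_less_s_inv[OF s_bound])

lemma dM_defect_gt:
  assumes "i \<in> M" "j \<in> M" "l \<in> M" "i \<noteq> j" "j \<noteq> l" "i \<noteq> l"
  shows "dM i l + 2*r < dM i j + dM j l"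
  using defect_gt_if_less_t_inv[OF t_bound assms] by simp

lemma idx1_in: "a \<in> Y1 \<Longrightarrow> idx1 a \<in> M"
  using idx1 unfolding onto_dis_le_def by blast

lemma idx2_in: "b \<in> Y2 \<Longrightarrow> idx2 b \<in> M"
  using idx2 unfolding onto_dis_le_def by blast

lemma idx1_dis: "a \<in> Y1 \<Longrightarrow> a' \<in> Y1 \<Longrightarrow> \<bar>d1 a a' - dM (idx1 a) (idx1 a')\<bar> \<le> 2*r"
  using idx1 unfolding onto_dis_le_def by (simp add: abs_minus_commute)

lemma idx2_dis: "b \<in> Y2 \<Longrightarrow> b' \<in> Y2 \<Longrightarrow> \<bar>d2 b b' - dM (idx2 b) (idx2 b')\<bar> \<le> 2*r"
  using idx2 unfolding onto_dis_le_def by (simp add: abs_minus_commute)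

fun idx :: "'a + 'b \<Rightarrow> 'm" where
  "idx (Inl a) = idx1 a"
| "idx (Inr b) = idx2 b"

lemma idx_in: "p \<in> Y1 <+> Y2 \<Longrightarrow> idx p \<in> M"
  by (auto simp: idx1_in idx2_in)

definition cross_dist :: "'m \<Rightarrow> 'm \<Rightarrow> real" where
  "cross_dist i j = (if i = j then 2*r else dM i j)"

lemma cross_dist_commute: "cross_dist i j = cross_dist j i"
  unfolding cross_dist_def by (simp add: M.commute)

lemma cross_dist_pos: "i \<in> M \<Longrightarrow> j \<in> M \<Longrightarrow> 0 < cross_dist i j"
  unfolding cross_dist_def using r_pos dM_gt[of i j] by auto

lemma le_cross_dist_add:
  assumes "i \<in> M" "j \<in> M" "l \<in> M" "c \<le> dM i l + 2*r"
  shows "c \<le> cross_dist i j + cross_dist j l"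
  using assms r_pos dM_gt[of i j] dM_gt[of j l] dM_defect_gt[of i j l] M.commute[of i j]
  unfolding cross_dist_def by (cases "i = j"; cases "j = l"; cases "i = l") auto

lemma cross_dist_le_add:
  assumes "i \<in> M" "j \<in> M" "l \<in> M" "0 \<le> c" "dM i j - 2*r \<le> c"
  shows "cross_dist i l \<le> c + cross_dist j l"
  using assms r_pos dM_gt[of j l] dM_defect_gt[of i j l]
  unfolding cross_dist_def by (cases "i = j"; cases "j = l"; cases "i = l") auto

fun glue_dist :: "'a + 'b \<Rightarrow> 'a + 'b \<Rightarrow> real" where
  "glue_dist (Inl a) (Inl a') = d1 a a'"
| "glue_dist (Inr b) (Inr b') = d2 b b'"
| "glue_dist p q = cross_dist (idx p) (idx q)"

lemma glue_dist_mixed: "isl p \<noteq> isl q \<Longrightarrow> glue_dist p q = cross_dist (idx p) (idx q)"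
  by (cases p; cases q) auto

lemma glue_dist_nonneg: "0 \<le> glue_dist p q"
  using r_pos M.nonneg by (cases p; cases q) (auto simp: cross_dist_def)

lemma glue_dist_commute: "glue_dist p q = glue_dist q p"
  using Y1.commute Y2.commute cross_dist_commute by (cases p; cases q) auto

lemma glue_dist_close:
  "p \<in> Y1 <+> Y2 \<Longrightarrow> q \<in> Y1 <+> Y2 \<Longrightarrow> \<bar>glue_dist p q - dM (idx p) (idx q)\<bar> \<le> 2*r"
  using r_pos idx1_dis idx2_dis idx1_in idx2_in
  by (elim PlusE) (auto simp: cross_dist_def)

lemma Metric_space_glue_dist: "Metric_space (Y1 <+> Y2) glue_dist"
proof
  fix p q
  show "0 \<le> glue_dist p q" by (rule glue_dist_nonneg)
  show "glue_dist p q = glue_dist q p" by (rule glue_dist_commute)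
next
  fix p q assume "p \<in> Y1 <+> Y2" "q \<in> Y1 <+> Y2"
  then show "glue_dist p q = 0 \<longleftrightarrow> p = q"
    using cross_dist_pos idx1_in idx2_in by (elim PlusE) fastforce+
next
  fix p q w assume T: "p \<in> Y1 <+> Y2" "q \<in> Y1 <+> Y2" "w \<in> Y1 <+> Y2"
  have close: "\<bar>glue_dist x y - dM (idx x) (idx y)\<bar> \<le> 2*r" if "x \<in> {p, q, w}" "y \<in> {p, q, w}" for x y
    using glue_dist_close T that by blast
  consider "isl p = isl q" "isl q = isl w" | "isl p = isl w" "isl p \<noteq> isl q"
    | "isl p = isl q" "isl p \<noteq> isl w" | "isl q = isl w" "isl p \<noteq> isl q"
    by blast
  then show "glue_dist p w \<le> glue_dist p q + glue_dist q w"
  proof cases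
    case 1
    with T show ?thesis
      using Y1.triangle Y2.triangle by (elim PlusE) auto
  next
    case 2
    then show ?thesis
      using le_cross_dist_add[OF idx_in idx_in idx_in, of p q w "glue_dist p w"] T close[of p w]
      by (simp add: glue_dist_mixed abs_le_iff)
  next
    case 3
    then show ?thesis
      using cross_dist_le_add[OF idx_in idx_in idx_in glue_dist_nonneg, of p q w p q] T close[of p q]
      by (simp add: glue_dist_mixed abs_le_iff)
  next
    case 4
    then show ?thesis
      using cross_dist_le_add[OF idx_in idx_in idx_in glue_dist_nonneg, of w q p w q] T close[of w q]
        cross_dist_commute[of "idx p"] glue_dist_commute[of w q]
      by (simp add: glue_dist_mixed abs_le_iff)
  qed
qed

fun to_Y1 :: "'a + 'b \<Rightarrow> 'a" where
  "to_Y1 (Inl a) = a"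
| "to_Y1 (Inr b) = (SOME a. a \<in> Y1 \<and> idx1 a = idx2 b)"

fun to_Y2 :: "'a + 'b \<Rightarrow> 'b" where
  "to_Y2 (Inl a) = (SOME b. b \<in> Y2 \<and> idx2 b = idx1 a)"
| "to_Y2 (Inr b) = b"

lemma to_Y1: "p \<in> Y1 <+> Y2 \<Longrightarrow> to_Y1 p \<in> Y1 \<and> idx1 (to_Y1 p) = idx p"
proof (elim PlusE)
  fix b assume "p = Inr b" "b \<in> Y2"
  moreover have "\<exists>a. a \<in> Y1 \<and> idx1 a = idx2 b"
    using idx1 idx2_in[OF \<open>b \<in> Y2\<close>] unfolding onto_dis_le_def by (metis imageE)
  ultimately show ?thesis using someI_ex[of "\<lambda>a. a \<in> Y1 \<and> idx1 a = idx2 b"] by simp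
qed auto

lemma to_Y2: "p \<in> Y1 <+> Y2 \<Longrightarrow> to_Y2 p \<in> Y2 \<and> idx2 (to_Y2 p) = idx p"
proof (elim PlusE)
  fix a assume "p = Inl a" "a \<in> Y1"
  moreover have "\<exists>b. b \<in> Y2 \<and> idx2 b = idx1 a"
    using idx2 idx1_in[OF \<open>a \<in> Y1\<close>] unfolding onto_dis_le_def by (metis imageE)
  ultimately show ?thesis using someI_ex[of "\<lambda>b. b \<in> Y2 \<and> idx2 b = idx1 a"] by simp
qed auto

definition dist1 :: "'a + 'b \<Rightarrow> 'a + 'b \<Rightarrow> real" where
  "dist1 p q = d1 (to_Y1 p) (to_Y1 q)"

definition dist2 :: "'a + 'b \<Rightarrow> 'a + 'b \<Rightarrow> real" where
  "dist2 p q = d2 (to_Y2 p) (to_Y2 q)"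

lemma dist1_close:
  "p \<in> Y1 <+> Y2 \<Longrightarrow> q \<in> Y1 <+> Y2 \<Longrightarrow> \<bar>dist1 p q - dM (idx p) (idx q)\<bar> \<le> 2*r"
  using idx1_dis to_Y1 unfolding dist1_def by metis

lemma dist2_close:
  "p \<in> Y1 <+> Y2 \<Longrightarrow> q \<in> Y1 <+> Y2 \<Longrightarrow> \<bar>dist2 p q - dM (idx p) (idx q)\<bar> \<le> 2*r"
  using idx2_dis to_Y2 unfolding dist2_def by metis

definition weight1 :: "real \<Rightarrow> real" where "weight1 t = max 0 (1 - t)"

definition weight2 :: "real \<Rightarrow> real" where "weight2 t = max 0 (t - 1)"

definition dist_at :: "real \<Rightarrow> 'a + 'b \<Rightarrow> 'a + 'b \<Rightarrow> real" where
  "dist_at t p q =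
     weight1 t * dist1 p q + (1 - weight1 t - weight2 t) * glue_dist p q + weight2 t * dist2 p q"

text \<open>\<open>dist1\<close> and \<open>dist2\<close> are only pseudometrics on \<open>Y1 <+> Y2\<close>, so at the end points the
  path consists of the copies \<open>Inl ` Y1\<close> and \<open>Inr ` Y2\<close> only.\<close>

definition carrier :: "real \<Rightarrow> ('a + 'b) set" where
  "carrier t = (if t \<le> 0 then Inl ` Y1 else if 2 \<le> t then Inr ` Y2 else Y1 <+> Y2)"

lemma dist_at_close:
  assumes "t \<in> {0..2}" "p \<in> Y1 <+> Y2" "q \<in> Y1 <+> Y2"
  shows "\<bar>dist_at t p q - dM (idx p) (idx q)\<bar> \<le> 2*r"
  unfolding dist_at_def
  using assms dist1_close[OF assms(2,3)] glue_dist_close[OF assms(2,3)] dist2_close[OF assms(2,3)]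
  by (intro abs_convex_comb3_le) (auto simp: weight1_def weight2_def)

lemma dist_at_Lipschitz:
  assumes "p \<in> Y1 <+> Y2" "q \<in> Y1 <+> Y2"
  shows "\<bar>dist_at u p q - dist_at t p q\<bar> \<le> 8*r*\<bar>u - t\<bar>"
proof -
  have bound: "\<bar>A * C + B * D\<bar> \<le> 8*r*\<bar>u - t\<bar>"
    if "\<bar>A\<bar> \<le> \<bar>u - t\<bar>" "\<bar>B\<bar> \<le> \<bar>u - t\<bar>" "\<bar>C\<bar> \<le> 4*r" "\<bar>D\<bar> \<le> 4*r" for A B C D :: real
  proof -
    have "\<bar>A * C + B * D\<bar> \<le> \<bar>A\<bar> * \<bar>C\<bar> + \<bar>B\<bar> * \<bar>D\<bar>"
      by (metis abs_mult abs_triangle_ineq)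
    also have "\<dots> \<le> \<bar>u - t\<bar> * (4*r) + \<bar>u - t\<bar> * (4*r)"
      using that by (intro add_mono mult_mono) auto
    finally show ?thesis by simp
  qed
  have "dist_at u p q - dist_at t p q = (weight1 u - weight1 t) * (dist1 p q - glue_dist p q)
      + (weight2 u - weight2 t) * (dist2 p q - glue_dist p q)"
    unfolding dist_at_def
    by (simp only: left_diff_distrib right_diff_distrib diff_diff_eq2 add_diff_eq diff_add_eq)
  also have "\<bar>\<dots>\<bar> \<le> 8*r*\<bar>u - t\<bar>"
  proof (rule bound)
    show "\<bar>weight1 u - weight1 t\<bar> \<le> \<bar>u - t\<bar>" "\<bar>weight2 u - weight2 t\<bar> \<le> \<bar>u - t\<bar>"
      unfolding weight1_def weight2_def by (simp_all add: max_def abs_if)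
    show "\<bar>dist1 p q - glue_dist p q\<bar> \<le> 4*r" "\<bar>dist2 p q - glue_dist p q\<bar> \<le> 4*r"
      using dist1_close[OF assms] dist2_close[OF assms] glue_dist_close[OF assms]
      by (simp_all add: abs_le_iff)
  qed
  finally show ?thesis .
qed

lemma dist_at_0: "dist_at 0 = dist1"
  by (simp add: fun_eq_iff dist_at_def weight1_def weight2_def)

lemma dist_at_2: "dist_at 2 = dist2"
  by (simp add: fun_eq_iff dist_at_def weight1_def weight2_def)

lemma dist_at_Inl: "t \<le> 1 \<Longrightarrow> dist_at t (Inl a) (Inl a') = d1 a a'"
  by (simp add: dist_at_def dist1_def weight1_def weight2_def algebra_simps)

lemma dist_at_Inr: "1 \<le> t \<Longrightarrow> dist_at t (Inr b) (Inr b') = d2 b b'"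
  by (simp add: dist_at_def dist2_def weight1_def weight2_def algebra_simps)

lemma carrier_0: "carrier 0 = Inl ` Y1"
  by (simp add: carrier_def)

lemma carrier_2: "carrier 2 = Inr ` Y2"
  by (simp add: carrier_def)

lemma carrier_subset: "carrier t \<subseteq> Y1 <+> Y2"
  unfolding carrier_def by auto

lemma Inl_subset_carrier: "t < 2 \<Longrightarrow> Inl ` Y1 \<subseteq> carrier t"
  unfolding carrier_def by auto

lemma Inr_subset_carrier: "0 < t \<Longrightarrow> Inr ` Y2 \<subseteq> carrier t"
  unfolding carrier_def by auto

lemma isometric_Inl:
  assumes "t \<le> 1"
  shows "isometric Y1 d1 (Inl ` Y1) (dist_at t)"
  unfolding isometric_def
proof (intro exI conjI)
  show "bij_betw Inl Y1 (Inl ` Y1)" by (rule inj_on_imp_bij_betw) simp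
  show "\<forall>a\<in>Y1. \<forall>a'\<in>Y1. dist_at t (Inl a) (Inl a') = d1 a a'"
    using assms by (simp add: dist_at_Inl)
qed

lemma isometric_Inr:
  assumes "1 \<le> t"
  shows "isometric Y2 d2 (Inr ` Y2) (dist_at t)"
  unfolding isometric_def
proof (intro exI conjI)
  show "bij_betw Inr Y2 (Inr ` Y2)" by (rule inj_on_imp_bij_betw) simp
  show "\<forall>b\<in>Y2. \<forall>b'\<in>Y2. dist_at t (Inr b) (Inr b') = d2 b b'"
    using assms by (simp add: dist_at_Inr)
qed

lemma idx_Inl: "idx ` Inl ` Y1 = M"
  using idx1 unfolding onto_dis_le_def by (simp add: image_image)

lemma idx_Inr: "idx ` Inr ` Y2 = M"
  using idx2 unfolding onto_dis_le_def by (simp add: image_image)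

lemma onto_dis_le_idx_carrier:
  assumes "t \<in> {0..2}"
  shows "onto_dis_le (2*r) idx (carrier t) (dist_at t) M dM"
proof -
  have "idx ` carrier t = M"
  proof
    show "idx ` carrier t \<subseteq> M"
      using carrier_subset by (auto intro: idx_in)
    show "M \<subseteq> idx ` carrier t"
    proof (cases "t < 2")
      case True
      then show ?thesis using image_mono[OF Inl_subset_carrier[OF True], of idx] idx_Inl by simp
    next
      case False
      then have "0 < t" by simp
      then show ?thesis using image_mono[OF Inr_subset_carrier[OF \<open>0 < t\<close>], of idx] idx_Inr by simp
    qed
  qed
  moreover have "\<bar>dM (idx p) (idx q) - dist_at t p q\<bar> \<le> 2*r" if "p \<in> carrier t" "q \<in> carrier t" for p q
    using dist_at_close[OF assms subsetD[OF carrier_subset that(1)] subsetD[OF carrier_subset that(2)]]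
    by (simp add: abs_minus_commute)
  ultimately show ?thesis
    unfolding onto_dis_le_def by blast
qed

lemma Metric_space_dist_at:
  assumes "t \<in> {0..2}"
  shows "Metric_space (carrier t) (dist_at t)"
proof -
  consider "t = 0" | "0 < t" "t < 2" | "t = 2" using assms by fastforce
  then show ?thesis
  proof cases
    case 1
    have "inj_on to_Y1 (Inl ` Y1)" "to_Y1 ` Inl ` Y1 \<subseteq> Y1"
      by (auto simp: inj_on_def)
    then show ?thesis
      using Metric_space_pullback[OF Y1.Metric_space_axioms] 1
      by (simp add: carrier_def dist_at_0 dist1_def[abs_def])
  next
    case 2
    have "0 \<le> weight1 t" "0 < 1 - weight1 t - weight2 t" "0 \<le> weight2 t"
      using 2 by (auto simp: weight1_def weight2_def)
    moreover have "to_Y1 ` (Y1 <+> Y2) \<subseteq> Y1" "to_Y2 ` (Y1 <+> Y2) \<subseteq> Y2"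
      using to_Y1 to_Y2 by blast+
    ultimately show ?thesis
      using Metric_space_weighted_sum[OF Metric_space_glue_dist Y1.Metric_space_axioms Y2.Metric_space_axioms] 2
      by (simp add: carrier_def dist_at_def[abs_def] dist1_def dist2_def)
  next
    case 3
    have "inj_on to_Y2 (Inr ` Y2)" "to_Y2 ` Inr ` Y2 \<subseteq> Y2"
      by (auto simp: inj_on_def)
    then show ?thesis
      using Metric_space_pullback[OF Y2.Metric_space_axioms] 3
      by (simp add: carrier_def dist_at_2 dist2_def[abs_def])
  qed
qed

lemma dGH_carrier:
  assumes "t \<in> {0..2}"
  shows "dGH M dM (carrier t) (dist_at t) = ereal r"
proof (cases "t \<le> 1")
  case True
  have "dGH M dM (Inl ` Y1) (dist_at t) = ereal r"
    using dGH_isometric[where X=M and dX=dM, OF isometric_sym[OF isometric_Inl[OF True]]] dGH_Y1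
    by simp
  then show ?thesis
    using dGH_eq_if_subspace[OF M.Metric_space_axioms Metric_space_dist_at[OF assms]
        onto_dis_le_idx_carrier[OF assms] Inl_subset_carrier idx_Inl _ r_pos s_bound e_bound] True
    by simp
next
  case False
  have "dGH M dM (Inr ` Y2) (dist_at t) = ereal r"
    using dGH_isometric[where X=M and dX=dM, OF isometric_sym[OF isometric_Inr]] dGH_Y2 False
    by simp
  then show ?thesis
    using dGH_eq_if_subspace[OF M.Metric_space_axioms Metric_space_dist_at[OF assms]
        onto_dis_le_idx_carrier[OF assms] Inr_subset_carrier idx_Inr _ r_pos s_bound e_bound] False
    by simp
qed

lemma dGH_carrier0_le:
  assumes "u \<in> {0..<2}"
  shows "dGH (carrier 0) (dist_at 0) (carrier u) (dist_at u) \<le> ereal (4*r*u)"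
proof (rule dGH_le_of_onto_dis_le)
  show "Metric_space (carrier 0) (dist_at 0)" "Metric_space (carrier u) (dist_at u)"
    using Metric_space_dist_at assms by auto
  have "(Inl \<circ> to_Y1) ` carrier u = Inl ` Y1"
  proof
    show "(Inl \<circ> to_Y1) ` carrier u \<subseteq> Inl ` Y1"
      using to_Y1 carrier_subset by fastforce
    show "Inl ` Y1 \<subseteq> (Inl \<circ> to_Y1) ` carrier u"
      using Inl_subset_carrier[of u] assms by (force intro: rev_image_eqI)
  qed
  moreover have "\<bar>dist_at 0 ((Inl \<circ> to_Y1) p) ((Inl \<circ> to_Y1) q) - dist_at u p q\<bar> \<le> 2*(4*r*u)"
    if "p \<in> carrier u" "q \<in> carrier u" for p q
    using dist_at_Lipschitz[OF subsetD[OF carrier_subset that(1)] subsetD[OF carrier_subset that(2)], of 0 u] assms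
    by (simp add: dist_at_Inl dist_at_0 dist1_def)
  ultimately show "onto_dis_le (2*(4*r*u)) (Inl \<circ> to_Y1) (carrier u) (dist_at u) (carrier 0) (dist_at 0)"
    unfolding onto_dis_le_def by (simp add: carrier_def)
  show "0 \<le> 4*r*u" using r_pos assms by simp
qed

lemma dGH_carrier2_le:
  assumes "u \<in> {0<..2}"
  shows "dGH (carrier 2) (dist_at 2) (carrier u) (dist_at u) \<le> ereal (4*r*(2 - u))"
proof (rule dGH_le_of_onto_dis_le)
  show "Metric_space (carrier 2) (dist_at 2)" "Metric_space (carrier u) (dist_at u)"
    using Metric_space_dist_at assms by auto
  have "(Inr \<circ> to_Y2) ` carrier u = Inr ` Y2"
  proof
    show "(Inr \<circ> to_Y2) ` carrier u \<subseteq> Inr ` Y2"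
      using to_Y2 carrier_subset by fastforce
    show "Inr ` Y2 \<subseteq> (Inr \<circ> to_Y2) ` carrier u"
      using Inr_subset_carrier[of u] assms by (force intro: rev_image_eqI)
  qed
  moreover have "\<bar>dist_at 2 ((Inr \<circ> to_Y2) p) ((Inr \<circ> to_Y2) q) - dist_at u p q\<bar> \<le> 2*(4*r*(2 - u))"
    if "p \<in> carrier u" "q \<in> carrier u" for p q
    using dist_at_Lipschitz[OF subsetD[OF carrier_subset that(1)] subsetD[OF carrier_subset that(2)], of 2 u] assms
    by (simp add: dist_at_Inr dist_at_2 dist2_def)
  ultimately show "onto_dis_le (2*(4*r*(2 - u))) (Inr \<circ> to_Y2) (carrier u) (dist_at u) (carrier 2) (dist_at 2)"
    unfolding onto_dis_le_def by (simp add: carrier_def)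
  show "0 \<le> 4*r*(2 - u)" using r_pos assms by simp
qed

lemma dGH_carrier_le:
  assumes "u \<in> {0..2}" "t \<in> {0..2}" "\<bar>u - t\<bar> < 2"
  shows "dGH (carrier u) (dist_at u) (carrier t) (dist_at t) \<le> ereal (4*r*\<bar>u - t\<bar>)"
proof -
  consider "u = 0" | "t = 0" | "u = 2" | "t = 2" | "0 < u" "u < 2" "0 < t" "t < 2"
    using assms by fastforce
  then show ?thesis
  proof cases
    case 1
    with assms have "t \<in> {0..<2}" "\<bar>u - t\<bar> = t" by auto
    then show ?thesis using dGH_carrier0_le 1 by simp
  next
    case 2
    with assms have "u \<in> {0..<2}" "\<bar>u - t\<bar> = u" by auto
    then show ?thesis
      using dGH_carrier0_le 2 dGH_commute[of "carrier u" "dist_at u" "carrier 0" "dist_at 0"] by simp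
  next
    case 3
    with assms have "t \<in> {0<..2}" "\<bar>u - t\<bar> = 2 - t" by auto
    then show ?thesis using dGH_carrier2_le 3 by simp
  next
    case 4
    with assms have "u \<in> {0<..2}" "\<bar>u - t\<bar> = 2 - u" by auto
    then show ?thesis
      using dGH_carrier2_le 4 dGH_commute[of "carrier u" "dist_at u" "carrier 2" "dist_at 2"] by simp
  next
    case 5
    then have T: "carrier u = Y1 <+> Y2" "carrier t = Y1 <+> Y2"
      by (simp_all add: carrier_def)
    have "onto_dis_le (2*(4*r*\<bar>u - t\<bar>)) id (carrier t) (dist_at t) (carrier u) (dist_at u)"
      unfolding onto_dis_le_def T
    proof (intro conjI ballI)
      fix p q assume "p \<in> Y1 <+> Y2" "q \<in> Y1 <+> Y2"
      then have "\<bar>dist_at u p q - dist_at t p q\<bar> \<le> 8*r*\<bar>u - t\<bar>"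
        by (rule dist_at_Lipschitz)
      then show "\<bar>dist_at u (id p) (id q) - dist_at t p q\<bar> \<le> 2*(4*r*\<bar>u - t\<bar>)"
        by simp
    qed simp
    from this show ?thesis
      by (rule dGH_le_of_onto_dis_le[OF Metric_space_dist_at[OF assms(1)] Metric_space_dist_at[OF assms(2)]])
        (use r_pos in simp)
  qed
qed

lemma GH_continuous_on_carrier: "GH_continuous_on {0..2} (\<lambda>t. (carrier t, dist_at t))"
  using r_pos dGH_carrier_le by (intro GH_continuous_onI_Lipschitz[where \<delta>\<^sub>0=2 and C="4*r"]) auto

lemma GH_sphere_path:
  fixes emb :: "'a + 'b \<Rightarrow> 'c"
  assumes "inj_on emb (Y1 <+> Y2)"
  shows "\<exists>(a::real) b (\<gamma> :: real \<Rightarrow> 'c set \<times> ('c \<Rightarrow> 'c \<Rightarrow> real)). a \<le> b \<and>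
     (\<forall>t\<in>{a..b}. Metric_space (fst (\<gamma> t)) (snd (\<gamma> t)) \<and>
                  dGH M dM (fst (\<gamma> t)) (snd (\<gamma> t)) = ereal r) \<and>
     GH_continuous_on {a..b} \<gamma> \<and>
     isometric (fst (\<gamma> a)) (snd (\<gamma> a)) Y1 d1 \<and>
     isometric (fst (\<gamma> b)) (snd (\<gamma> b)) Y2 d2"
proof -
  define \<gamma> where "\<gamma> t = (emb ` carrier t,
      \<lambda>x y. dist_at t (inv_into (Y1 <+> Y2) emb x) (inv_into (Y1 <+> Y2) emb y))" for t
  have iso: "isometric (carrier t) (dist_at t) (fst (\<gamma> t)) (snd (\<gamma> t))" for t
    unfolding \<gamma>_def using isometric_image[OF assms carrier_subset] by simp
  have "Metric_space (fst (\<gamma> t)) (snd (\<gamma> t))" if "t \<in> {0..2}" for t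
    unfolding \<gamma>_def using Metric_space_image[OF Metric_space_dist_at[OF that] assms carrier_subset] by simp
  moreover have "dGH M dM (fst (\<gamma> t)) (snd (\<gamma> t)) = ereal r" if "t \<in> {0..2}" for t
    using dGH_isometric[where X=M and dX=dM, OF isometric_sym[OF iso]] dGH_carrier[OF that] by simp
  moreover have "GH_continuous_on {0..2} \<gamma>"
    by (rule GH_continuous_on_isometric[OF GH_continuous_on_carrier]) (simp add: iso)
  moreover have "isometric (fst (\<gamma> 0)) (snd (\<gamma> 0)) Y1 d1"
    using isometric_trans[OF isometric_sym[OF iso[of 0, unfolded carrier_0]]
        isometric_sym[OF isometric_Inl[of 0]]] by simp
  moreover have "isometric (fst (\<gamma> 2)) (snd (\<gamma> 2)) Y2 d2"
    using isometric_trans[OF isometric_sym[OF iso[of 2, unfolded carrier_2]]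
        isometric_sym[OF isometric_Inr[of 2]]] by simp
  ultimately show ?thesis
    by (intro exI[of _ 0] exI[of _ 2] exI[of _ \<gamma>]) auto
qed

end

theorem theorem3:
  fixes M :: "'m set" and dM :: "'m \<Rightarrow> 'm \<Rightarrow> real"
    and Y1 :: "'a set" and d1 :: "'a \<Rightarrow> 'a \<Rightarrow> real"
    and Y2 :: "'b set" and d2 :: "'b \<Rightarrow> 'b \<Rightarrow> real"
    and r :: real
  assumes "generic M dM"
    and "0 < r"
    and "ereal r < s_inv M dM / 4" and "ereal r < e_inv M dM / 4" and "ereal r < t_inv M dM / 6"
    and "Metric_space Y1 d1" and "dGH M dM Y1 d1 = ereal r"
    and "Metric_space Y2 d2" and "dGH M dM Y2 d2 = ereal r"
    and "\<exists>g :: 'a \<times> 'b \<times> 'm \<times> real \<Rightarrow> 'c. inj_on g (Y1 \<times> Y2 \<times> M \<times> (UNIV :: real set))"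
  shows "\<exists>(a::real) b (\<gamma> :: real \<Rightarrow> 'c set \<times> ('c \<Rightarrow> 'c \<Rightarrow> real)). a \<le> b \<and>
     (\<forall>t\<in>{a..b}. Metric_space (fst (\<gamma> t)) (snd (\<gamma> t)) \<and>
                  dGH M dM (fst (\<gamma> t)) (snd (\<gamma> t)) = ereal r) \<and>
     (\<forall>t\<in>{a..b}. \<forall>\<epsilon>>0. \<exists>\<delta>>0. \<forall>u\<in>{a..b}. \<bar>u - t\<bar> < \<delta> \<longrightarrow>
          dGH (fst (\<gamma> u)) (snd (\<gamma> u)) (fst (\<gamma> t)) (snd (\<gamma> t)) < ereal \<epsilon>) \<and>
     isometric (fst (\<gamma> a)) (snd (\<gamma> a)) Y1 d1 \<and>
     isometric (fst (\<gamma> b)) (snd (\<gamma> b)) Y2 d2"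
proof -
  have MM: "Metric_space M dM" and "M \<noteq> {}"
    using assms(1) unfolding generic_def by auto
  have s: "ereal (4*r) < s_inv M dM" and e: "ereal (4*r) < e_inv M dM"
    using assms(3,4) by (simp_all add: ereal_less_divide_pos)
  have "ereal (6*r) < t_inv M dM"
    using assms(5) by (simp add: ereal_less_divide_pos)
  moreover have "ereal (2*r) \<le> ereal (6*r)" using assms(2) by simp
  ultimately have t: "ereal (2*r) < t_inv M dM" by (rule le_less_trans[rotated])
  obtain idx1 where idx1: "onto_dis_le (2*r) idx1 Y1 d1 M dM"
    using dGH_eq_imp_onto_dis_le[OF MM assms(7) _ s e] assms(2) by auto
  obtain idx2 where idx2: "onto_dis_le (2*r) idx2 Y2 d2 M dM"
    using dGH_eq_imp_onto_dis_le[OF MM assms(9) _ s e] assms(2) by auto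
  interpret GH_sphere_pair M dM Y1 d1 Y2 d2 r idx1 idx2
    by (intro GH_sphere_pair.intro GH_sphere_pair_axioms.intro)
      (fact MM assms(2,6-9) s e t idx1 idx2)+
  obtain m0 where "m0 \<in> M" using \<open>M \<noteq> {}\<close> by blast
  then obtain a0 b0 where "a0 \<in> Y1" "b0 \<in> Y2"
    using idx1 idx2 unfolding onto_dis_le_def by blast
  obtain g :: "'a \<times> 'b \<times> 'm \<times> real \<Rightarrow> 'c" where "inj_on g (Y1 \<times> Y2 \<times> M \<times> (UNIV :: real set))"
    using assms(10) by blast
  from inj_on_Plus_of_inj_on_product[OF this \<open>a0 \<in> Y1\<close> \<open>b0 \<in> Y2\<close> \<open>m0 \<in> M\<close> UNIV_I UNIV_I zero_neq_one]
  show ?thesis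
    using GH_sphere_path unfolding GH_continuous_on_def by blast
qed

end
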